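(* Let $A \in \mathbb{R}^{p \times n}$ have all entries nonnegative, let $1 \leq k \leq p$, and let $\widetilde{x} \in \{0,1\}^n$. Then for all $x \in \{0,1\}^n$, $$Q_k(Ax) \geq Q_k(A\widetilde{x})\left(\sum_{i=1}^n \widetilde{x}_i x_i - \sum_{i=1}^n \widetilde{x}_i + 1\right),$$ and this inequality holds with equality for $x = \widetilde{x}$.
   Context: For $y \in \mathbb{R}^p$ and an integer $1 \leq k \leq p$, $Q_k(y)$ denotes the $k$-th largest entry of $y$ (entries counted with multiplicity). *)

theory Defs
  imports "HOL-Analysis.Analysis" "HOL-Library.Multiset"
begin

definition kth_largest :: "nat \<Rightarrow> real ^ 'p \<Rightarrow> real" where
  "kth_largest k y =
     rev (sorted_list_of_multiset (image_mset (\<lambda>i. y $ i) (mset_set (UNIV :: 'p set)))) ! (k - 1)"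

end

theory Submission
  imports Defs
begin

text \<open>\<open>Q\<^sub>k\<close> is monotone in each entry, because \<open>t \<le> Q\<^sub>k y\<close> holds iff at least \<open>k\<close>
  entries of \<open>y\<close> are \<open>\<ge> t\<close>; in particular it is nonnegative on nonnegative vectors.
  For 0/1 vectors the factor on the right equals \<open>1 - c\<close>, where \<open>c\<close> counts the indices
  \<open>i\<close> with \<open>xt\<^sub>i = 1\<close> and \<open>x\<^sub>i = 0\<close>. If \<open>c = 0\<close> then \<open>xt \<le> x\<close>, hence \<open>A xt \<le> A x\<close>
  as \<open>A\<close> is nonnegative, and monotonicity applies; otherwise the right-hand side is
  \<open>\<le> 0 \<le> Q\<^sub>k(A x)\<close>.\<close>

lemma sorted_wrt_ge_nth_ge_iff_length_filter:
  fixes ys :: "'a::linorder list"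
  assumes sorted: "sorted_wrt (\<ge>) ys" and j: "j < length ys"
  shows "t \<le> ys ! j \<longleftrightarrow> j < length (filter (\<lambda>x. t \<le> x) ys)"
proof
  assume "t \<le> ys ! j"
  have "ys ! j \<le> ys ! i" if "i \<le> j" for i
    using sorted_wrt_nth_less[OF sorted, of i j] j that by (cases "i = j") auto
  with \<open>t \<le> ys ! j\<close> have "\<forall>x\<in>set (take (Suc j) ys). t \<le> x"
    using j by (fastforce simp: in_set_conv_nth less_Suc_eq_le intro: order_trans)
  then have "filter (\<lambda>x. t \<le> x) (take (Suc j) ys) = take (Suc j) ys"
    by simp
  then have "Suc j \<le> length (filter (\<lambda>x. t \<le> x) (take (Suc j) ys))"
    using j by simp
  also have "\<dots> \<le> length (filter (\<lambda>x. t \<le> x) ys)"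
    by (metis append_take_drop_id filter_append le_add1 length_append)
  finally show "j < length (filter (\<lambda>x. t \<le> x) ys)"
    by simp
next
  assume count: "j < length (filter (\<lambda>x. t \<le> x) ys)"
  show "t \<le> ys ! j"
  proof (rule ccontr)
    assume "\<not> t \<le> ys ! j"
    have below_j: "ys ! i \<le> ys ! j" if "j \<le> i" "i < length ys" for i
      using sorted_wrt_nth_less[OF sorted, of j i] that by (cases "i = j") auto
    have "\<forall>x\<in>set (drop j ys). \<not> t \<le> x"
    proof
      fix x assume "x \<in> set (drop j ys)"
      then obtain i where "i < length (drop j ys)" "x = drop j ys ! i"
        unfolding in_set_conv_nth by blast
      then have "x = ys ! (j + i)" "j \<le> j + i" "j + i < length ys"
        by auto
      then show "\<not> t \<le> x"
        using \<open>\<not> t \<le> ys ! j\<close> below_j[of "j + i"] by auto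
    qed
    then have "filter (\<lambda>x. t \<le> x) ys = filter (\<lambda>x. t \<le> x) (take j ys)"
      by (metis append_Nil2 append_take_drop_id filter_False filter_append)
    also have "length \<dots> \<le> j"
      by (metis length_filter_le length_take min.bounded_iff)
    finally show False
      using count by simp
  qed
qed

lemma kth_largest_ge_iff_card:
  fixes y :: "real ^ 'p"
  assumes "1 \<le> k" "k \<le> CARD('p)"
  shows "t \<le> kth_largest k y \<longleftrightarrow> k \<le> card {i. t \<le> y $ i}"
proof -
  define M where "M = image_mset (\<lambda>i. y $ i) (mset_set (UNIV :: 'p set))"
  define ys where "ys = rev (sorted_list_of_multiset M)"
  have "mset ys = M"
    by (simp add: ys_def)
  have length_ys: "length ys = CARD('p)"
    by (metis \<open>mset ys = M\<close> M_def size_mset size_image_mset size_mset_set)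
  have "length (filter (\<lambda>x. t \<le> x) ys) = size (filter_mset (\<lambda>x. t \<le> x) M)"
    by (metis \<open>mset ys = M\<close> mset_filter size_mset)
  also have "\<dots> = card {i. t \<le> y $ i}"
    by (simp add: M_def filter_mset_image_mset)
  finally have length_filter_ys: "length (filter (\<lambda>x. t \<le> x) ys) = card {i. t \<le> y $ i}" .
  have "sorted_wrt (\<ge>) ys"
    by (simp add: ys_def sorted_wrt_rev)
  then have "t \<le> ys ! (k - 1) \<longleftrightarrow> k - 1 < card {i. t \<le> y $ i}"
    using assms length_ys
    by (simp add: sorted_wrt_ge_nth_ge_iff_length_filter length_filter_ys)
  moreover have "k - 1 < card {i. t \<le> y $ i} \<longleftrightarrow> k \<le> card {i. t \<le> y $ i}"
    using assms(1) by linarith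
  moreover have "kth_largest k y = ys ! (k - 1)"
    by (simp add: kth_largest_def M_def ys_def)
  ultimately show ?thesis
    by simp
qed

lemma kth_largest_mono:
  fixes y z :: "real ^ 'p"
  assumes "1 \<le> k" "k \<le> CARD('p)" and le: "\<forall>i. y $ i \<le> z $ i"
  shows "kth_largest k y \<le> kth_largest k z"
proof -
  let ?t = "kth_largest k y"
  have "k \<le> card {i. ?t \<le> y $ i}"
    using kth_largest_ge_iff_card[OF assms(1,2)] by blast
  also have "\<dots> \<le> card {i. ?t \<le> z $ i}"
    by (rule card_mono) (use le order_trans in auto)
  finally show ?thesis
    using kth_largest_ge_iff_card[OF assms(1,2)] by blast
qed

lemma kth_largest_nonneg:
  fixes y :: "real ^ 'p"
  assumes "1 \<le> k" "k \<le> CARD('p)" and "\<forall>i. 0 \<le> y $ i"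
  shows "0 \<le> kth_largest k y"
  using kth_largest_ge_iff_card[OF assms(1,2)] assms(2,3) by simp

lemma nonneg_matrix_vector_mult_mono:
  fixes A :: "real ^ 'n ^ 'p"
  assumes "\<forall>i j. 0 \<le> A $ i $ j" and "\<forall>j. x $ j \<le> y $ j"
  shows "(A *v x) $ i \<le> (A *v y) $ i"
  using assms by (auto simp: matrix_vector_mult_def intro!: sum_mono mult_left_mono)

lemma binary_sum_mult_diff_sum_eq:
  fixes u v :: "'a \<Rightarrow> real"
  assumes "finite S" "\<forall>i\<in>S. u i \<in> {0, 1}" "\<forall>i\<in>S. v i \<in> {0, 1}"
  shows "(\<Sum>i\<in>S. u i * v i) - (\<Sum>i\<in>S. u i) = - real (card {i\<in>S. u i = 1 \<and> v i = 0})"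
proof -
  have "(\<Sum>i\<in>S. u i * v i) - (\<Sum>i\<in>S. u i) = - (\<Sum>i\<in>S. of_bool (u i = 1 \<and> v i = 0))"
    unfolding sum_subtractf[symmetric] sum_negf[symmetric]
    by (rule sum.cong) (use assms(2,3) in auto)
  also have "\<dots> = - real (card {i\<in>S. u i = 1 \<and> v i = 0})"
    using assms(1) by (simp add: Int_def)
  finally show ?thesis .
qed

theorem theorem5:
  fixes A :: "real ^ 'n ^ 'p" and k :: nat and xt :: "real ^ 'n"
  assumes "\<forall>i j. A $ i $ j \<ge> 0"
    and "1 \<le> k" and "k \<le> CARD('p)"
    and "\<forall>j. xt $ j \<in> {0, 1}"
  shows "(\<forall>x :: real ^ 'n. (\<forall>j. x $ j \<in> {0, 1}) \<longrightarrow>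
            kth_largest k (A *v x) \<ge>
              kth_largest k (A *v xt) *
                ((\<Sum>i\<in>UNIV. xt $ i * x $ i) - (\<Sum>i\<in>UNIV. xt $ i) + 1))
         \<and> kth_largest k (A *v xt) =
              kth_largest k (A *v xt) *
                ((\<Sum>i\<in>UNIV. xt $ i * xt $ i) - (\<Sum>i\<in>UNIV. xt $ i) + 1)"
proof (intro conjI allI impI)
  have Q_nonneg: "0 \<le> kth_largest k (A *v v)" if "\<forall>j. v $ j \<in> {0, 1}" for v
  proof -
    have "\<forall>j. 0 $ j \<le> v $ j"
      using that by (metis insert_iff singletonD zero_index order_refl zero_le_one)
    then have "\<forall>i. 0 \<le> (A *v v) $ i"
      using nonneg_matrix_vector_mult_mono[OF assms(1)] by (metis matrix_vector_mult_0_right zero_index)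
    then show ?thesis
      by (rule kth_largest_nonneg[OF assms(2,3)])
  qed
  fix x :: "real ^ 'n"
  assume x: "\<forall>j. x $ j \<in> {0, 1}"
  define c where "c = card {i\<in>UNIV. xt $ i = 1 \<and> x $ i = 0}"
  have factor: "(\<Sum>i\<in>UNIV. xt $ i * x $ i) - (\<Sum>i\<in>UNIV. xt $ i) + 1 = 1 - real c"
    using binary_sum_mult_diff_sum_eq[of UNIV "\<lambda>i. xt $ i" "\<lambda>i. x $ i"] assms(4) x
    by (simp add: c_def)
  show "kth_largest k (A *v xt) * ((\<Sum>i\<in>UNIV. xt $ i * x $ i) - (\<Sum>i\<in>UNIV. xt $ i) + 1)
    \<le> kth_largest k (A *v x)"
  proof (cases "c = 0")
    case True
    then have "\<not> (xt $ j = 1 \<and> x $ j = 0)" for j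
      by (simp add: c_def)
    then have "\<forall>j. xt $ j \<le> x $ j"
      using assms(4) x by (metis insert_iff singletonD order_refl zero_le_one)
    then show ?thesis
      using True factor nonneg_matrix_vector_mult_mono[OF assms(1)]
        kth_largest_mono[OF assms(2,3)] by simp
  next
    case False
    then have "kth_largest k (A *v xt) * (1 - real c) \<le> 0"
      using Q_nonneg[OF assms(4)] by (simp add: mult_nonneg_nonpos)
    then show ?thesis
      using factor Q_nonneg[OF x] by simp
  qed
next
  show "kth_largest k (A *v xt) =
    kth_largest k (A *v xt) * ((\<Sum>i\<in>UNIV. xt $ i * xt $ i) - (\<Sum>i\<in>UNIV. xt $ i) + 1)"
    using binary_sum_mult_diff_sum_eq[of UNIV "\<lambda>i. xt $ i" "\<lambda>i. xt $ i"] assms(4) by simp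
qed

end
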